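(* Let $D\ge1$, let $Q_D$ be the $D$-dimensional hypercube on $X=\{0,1\}^D$ with adjacency matrix $A$. Fix $x\in X$ and let $B$ be a symmetric $A$-like matrix such that $B_{xy}=0$ for all $y\in X$. Then $B=0$.
   Context: $Q_D$ is the graph with vertex set $X=\{0,1\}^D$, two vertices adjacent iff they differ in exactly one coordinate. Matrices are real with rows and columns indexed by $X$. A matrix $B$ is $A$-like if $BA=AB$ and $B_{xy}=0$ for all $x,y\in X$ that are neither equal nor adjacent. *)

theory Defs
  imports "HOL-Analysis.Analysis"
begin

definition cube :: "nat \<Rightarrow> bool list set" where
  "cube D = {xs. length xs = D}"

definition hdist :: "bool list \<Rightarrow> bool list \<Rightarrow> nat" where
  "hdist xs ys = card {i. i < length xs \<and> xs ! i \<noteq> ys ! i}"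

definition adj :: "bool list \<Rightarrow> bool list \<Rightarrow> bool" where
  "adj xs ys \<longleftrightarrow> length xs = length ys \<and> hdist xs ys = 1"

text \<open>Real matrices indexed by X, represented as functions; only entries on X matter.\<close>
definition adjmat :: "bool list \<Rightarrow> bool list \<Rightarrow> real" where
  "adjmat x y = (if adj x y then 1 else 0)"

definition matmul :: "nat \<Rightarrow> (bool list \<Rightarrow> bool list \<Rightarrow> real) \<Rightarrow> (bool list \<Rightarrow> bool list \<Rightarrow> real)
    \<Rightarrow> bool list \<Rightarrow> bool list \<Rightarrow> real" where
  "matmul D M N x y = (\<Sum>z\<in>cube D. M x z * N z y)"

definition A_like :: "nat \<Rightarrow> (bool list \<Rightarrow> bool list \<Rightarrow> real) \<Rightarrow> bool" where
  "A_like D B \<longleftrightarrow>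
     (\<forall>x\<in>cube D. \<forall>y\<in>cube D. matmul D B adjmat x y = matmul D adjmat B x y) \<and>
     (\<forall>x\<in>cube D. \<forall>y\<in>cube D. x \<noteq> y \<and> \<not> adj x y \<longrightarrow> B x y = 0)"

end

theory Submission
  imports Defs
begin

text \<open>
  Write \<open>flip k u\<close> for the neighbour of \<open>u\<close> in direction \<open>k\<close>. As \<open>Q_D\<close> has no triangles,
  the entry of \<open>BA = AB\<close> at an edge \<open>(u, flip i u)\<close> reads \<open>B u u = B (flip i u) (flip i u)\<close>, and
  its entry at opposite corners \<open>u\<close>, \<open>flip i (flip j u)\<close> of a square equates the sums of \<open>B\<close>
  along the two paths between them. Applied to the two squares containing the parallel edges
  \<open>(u, flip k u)\<close> and \<open>(flip j u, flip k (flip j u))\<close>, and combined with the symmetry of \<open>B\<close>,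
  this shows that parallel edges carry the same weight. So the diagonal of \<open>B\<close> and its edge
  weights in each direction are constant on the connected graph \<open>Q_D\<close>; they vanish at \<open>x\<close>,
  hence everywhere, and the remaining entries vanish because \<open>B\<close> is \<open>A\<close>-like.
\<close>

definition flip :: "nat \<Rightarrow> bool list \<Rightarrow> bool list" where
  "flip k u = u[k := \<not> u ! k]"

definition disagree :: "bool list \<Rightarrow> bool list \<Rightarrow> nat set" where
  "disagree u v = {k. k < length u \<and> u ! k \<noteq> v ! k}"

definition toggle :: "nat \<Rightarrow> nat set \<Rightarrow> nat set" where
  "toggle k S = (if k \<in> S then S - {k} else insert k S)"

lemma length_flip [simp]: "length (flip k u) = length u"
  by (simp add: flip_def)

lemma nth_flip: "flip k u ! m = (if m = k \<and> k < length u then \<not> u ! k else u ! m)"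
  by (cases "k < length u") (auto simp: flip_def nth_list_update list_update_beyond)

lemma flip_flip [simp]: "flip k (flip k u) = u"
  by (rule nth_equalityI) (auto simp: nth_flip)

lemma flip_commute: "flip i (flip j u) = flip j (flip i u)"
  by (rule nth_equalityI) (auto simp: nth_flip)

lemma flip_in_cube [simp]: "flip k u \<in> cube D \<longleftrightarrow> u \<in> cube D"
  by (simp add: cube_def)

lemma finite_cube: "finite (cube D)"
  using finite_lists_length_eq[of "UNIV :: bool set" D] by (simp add: cube_def)

lemma finite_disagree [simp]: "finite (disagree u v)"
  by (simp add: disagree_def)

lemma disagree_flip_left [simp]:
  "k < length u \<Longrightarrow> length u = length v \<Longrightarrow> disagree (flip k u) v = toggle k (disagree u v)"
  by (auto simp: disagree_def toggle_def nth_flip)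

lemma disagree_flip_right [simp]:
  "k < length u \<Longrightarrow> length u = length v \<Longrightarrow> disagree u (flip k v) = toggle k (disagree u v)"
  by (auto simp: disagree_def toggle_def nth_flip)

lemma disagree_self [simp]: "disagree u u = {}"
  by (simp add: disagree_def)

lemma disagree_empty_iff: "length u = length v \<Longrightarrow> disagree u v = {} \<longleftrightarrow> u = v"
  by (auto simp: disagree_def intro: nth_equalityI)

lemma hdist_eq_card_disagree: "hdist u v = card (disagree u v)"
  by (simp add: hdist_def disagree_def)

lemma adj_iff_disagree_singleton:
  "adj u v \<longleftrightarrow> length u = length v \<and> (\<exists>k. disagree u v = {k})"
  by (simp add: adj_def hdist_eq_card_disagree card_1_singleton_iff)

lemma adj_imp_flip:
  assumes "adj u v"
  obtains k where "k < length u" "v = flip k u"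
proof -
  from assms obtain k where len: "length u = length v" and k: "disagree u v = {k}"
    by (auto simp: adj_iff_disagree_singleton)
  then have "k < length u" by (auto simp: disagree_def)
  with k len have "disagree (flip k u) v = {}" by (simp add: toggle_def)
  with len have "v = flip k u" by (simp add: disagree_empty_iff)
  with \<open>k < length u\<close> show thesis by (rule that)
qed

lemma adj_flip: "k < length u \<Longrightarrow> adj u (flip k u)"
  by (simp add: adj_iff_disagree_singleton toggle_def)

lemma disagree_commute: "length u = length v \<Longrightarrow> disagree u v = disagree v u"
  by (auto simp: disagree_def)

lemma adj_commute: "adj u v \<longleftrightarrow> adj v u"
  by (auto simp: adj_iff_disagree_singleton disagree_commute)

lemma inj_on_flip: "inj_on (\<lambda>k. flip k w) {..<length w}"
proof (rule inj_onI)
  fix i j assume "i \<in> {..<length w}" "j \<in> {..<length w}" "flip i w = flip j w"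
  then have "flip i w ! i = flip j w ! i" by simp
  with \<open>i \<in> {..<length w}\<close> show "i = j" by (auto simp: nth_flip split: if_splits)
qed

lemma neighbours_eq_flips:
  assumes "w \<in> cube D"
  shows "{z \<in> cube D. adj z w} = (\<lambda>k. flip k w) ` {..<D}"
proof -
  have "length w = D" using assms by (simp add: cube_def)
  show ?thesis
  proof (intro equalityI subsetI)
    fix z assume "z \<in> {z \<in> cube D. adj z w}"
    then have "adj w z" by (auto simp: adj_commute)
    then obtain k where "k < length w" "z = flip k w" by (rule adj_imp_flip)
    with \<open>length w = D\<close> show "z \<in> (\<lambda>k. flip k w) ` {..<D}" by auto
  next
    fix z assume "z \<in> (\<lambda>k. flip k w) ` {..<D}"
    with assms \<open>length w = D\<close> show "z \<in> {z \<in> cube D. adj z w}"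
      by (auto simp: adj_commute adj_flip)
  qed
qed

lemma matmul_adjmat_right:
  assumes "w \<in> cube D"
  shows "matmul D M adjmat u w = (\<Sum>k<D. M u (flip k w))"
proof -
  have "matmul D M adjmat u w = (\<Sum>z\<in>{z \<in> cube D. adj z w}. M u z)"
    by (simp add: matmul_def adjmat_def sum.inter_filter finite_cube if_distrib cong: if_cong)
  also have "\<dots> = (\<Sum>k<D. M u (flip k w))"
    using assms inj_on_flip[of w]
    unfolding neighbours_eq_flips[OF assms] by (simp add: sum.reindex cube_def)
  finally show ?thesis .
qed

lemma matmul_adjmat_left:
  assumes "u \<in> cube D"
  shows "matmul D adjmat M u w = (\<Sum>k<D. M (flip k u) w)"
proof -
  have "matmul D adjmat M u w = (\<Sum>z\<in>{z \<in> cube D. adj z u}. M z w)"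
    by (auto simp: matmul_def adjmat_def sum.inter_filter finite_cube adj_commute[of u]
        intro!: sum.cong)
  also have "\<dots> = (\<Sum>k<D. M (flip k u) w)"
    using assms inj_on_flip[of u]
    unfolding neighbours_eq_flips[OF assms] by (simp add: sum.reindex cube_def)
  finally show ?thesis .
qed

lemma hdist_flip_left:
  "k < length u \<Longrightarrow> length u = length v \<Longrightarrow> hdist (flip k u) v = hdist u (flip k v)"
  by (simp add: hdist_eq_card_disagree)

lemma hdist_flip2:
  "i < length u \<Longrightarrow> j < length u \<Longrightarrow> i \<noteq> j \<Longrightarrow> hdist u (flip i (flip j u)) = 2"
  by (simp add: hdist_eq_card_disagree toggle_def)

lemma hdist_flip3:
  "i < length u \<Longrightarrow> j < length u \<Longrightarrow> k < length u \<Longrightarrow> distinct [i, j, k] \<Longrightarrow>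
   hdist u (flip i (flip j (flip k u))) = 3"
  by (simp add: hdist_eq_card_disagree toggle_def)

lemma sum_eq_single_support:
  "finite A \<Longrightarrow> i \<in> A \<Longrightarrow> (\<And>k. k \<in> A \<Longrightarrow> k \<noteq> i \<Longrightarrow> f k = 0) \<Longrightarrow> sum f A = f i"
  by (simp add: sum.mono_neutral_right[of A "{i}"])

lemma sum_eq_two_support:
  "finite A \<Longrightarrow> i \<in> A \<Longrightarrow> j \<in> A \<Longrightarrow> i \<noteq> j \<Longrightarrow> (\<And>k. k \<in> A \<Longrightarrow> k \<noteq> i \<Longrightarrow> k \<noteq> j \<Longrightarrow> f k = 0)
   \<Longrightarrow> sum f A = f i + f j"
  by (simp add: sum.mono_neutral_right[of A "{i, j}"])

lemma A_like_commute_flips: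
  "A_like D B \<Longrightarrow> u \<in> cube D \<Longrightarrow> w \<in> cube D \<Longrightarrow>
   (\<Sum>k<D. B u (flip k w)) = (\<Sum>k<D. B (flip k u) w)"
  by (simp add: A_like_def flip: matmul_adjmat_left matmul_adjmat_right)

lemma A_like_far_zero:
  assumes "A_like D B" "u \<in> cube D" "v \<in> cube D" "2 \<le> hdist u v"
  shows "B u v = 0"
proof -
  have "u \<noteq> v" using assms(4) by (auto simp: hdist_eq_card_disagree)
  moreover have "\<not> adj u v" using assms(4) by (auto simp: adj_def)
  ultimately show ?thesis using assms(1-3) by (simp add: A_like_def)
qed

lemma A_like_diag_flip:
  assumes B: "A_like D B" and u: "u \<in> cube D" and i: "i < D"
  shows "B (flip i u) (flip i u) = B u u"
proof -
  have len: "length u = D" using u by (simp add: cube_def)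
  have "(\<Sum>k<D. B u (flip k (flip i u))) = B u u"
    using u i by (subst sum_eq_single_support[of _ i])
      (auto intro!: A_like_far_zero[OF B u] simp: len hdist_flip2)
  moreover have "(\<Sum>k<D. B (flip k u) (flip i u)) = B (flip i u) (flip i u)"
    using u i by (subst sum_eq_single_support[of _ i])
      (auto intro!: A_like_far_zero[OF B] simp: len hdist_flip_left hdist_flip2)
  ultimately show ?thesis
    using A_like_commute_flips[OF B u, of "flip i u"] u by simp
qed

lemma A_like_square:
  assumes B: "A_like D B" and u: "u \<in> cube D" and ij: "i < D" "j < D" "i \<noteq> j"
  defines "w \<equiv> flip i (flip j u)"
  shows "B u (flip i u) + B u (flip j u) = B (flip i u) w + B (flip j u) w"
proof -
  have len: "length u = D" using u by (simp add: cube_def)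
  have "(\<Sum>k<D. B u (flip k w)) = B u (flip j u) + B u (flip i u)"
    using u ij unfolding w_def
    by (subst sum_eq_two_support[of _ i j])
      (auto intro!: A_like_far_zero[OF B u] simp: len hdist_flip3 flip_commute[of j i])
  moreover have "(\<Sum>k<D. B (flip k u) w) = B (flip i u) w + B (flip j u) w"
    using u ij unfolding w_def
    by (subst sum_eq_two_support[of _ i j])
      (auto intro!: A_like_far_zero[OF B] simp: len hdist_flip_left hdist_flip3)
  ultimately show ?thesis
    using A_like_commute_flips[OF B u, of w] u by (simp add: w_def)
qed

lemma symmetric_A_like_edge_flip:
  assumes B: "A_like D B" and sym: "\<forall>y\<in>cube D. \<forall>z\<in>cube D. B y z = B z y"
    and v: "v \<in> cube D" and j: "j < D" and k: "k < D"
  shows "B (flip j v) (flip k (flip j v)) = B v (flip k v)"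
proof (cases "j = k")
  case True
  then show ?thesis using sym v by simp
next
  case False
  let ?w = "flip k (flip j v)"
  have sq: "B v (flip k v) + B v (flip j v) = B (flip k v) ?w + B (flip j v) ?w"
    using A_like_square[OF B v k j] False by simp
  have "B (flip k v) ?w + B (flip k v) v = B ?w (flip j v) + B v (flip j v)"
    using A_like_square[OF B _ j k, of "flip k v"] False v by (simp add: flip_commute[of j k])
  moreover have "B ?w (flip j v) = B (flip j v) ?w" "B (flip k v) v = B v (flip k v)"
    using sym v by auto
  ultimately show ?thesis using sq by linarith
qed

lemma flip_invariant_const:
  assumes inv: "\<And>v i. v \<in> cube D \<Longrightarrow> i < D \<Longrightarrow> f (flip i v) = f v"
    and u: "u \<in> cube D" and v: "v \<in> cube D"
  shows "f u = f v"
  using u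
proof (induction "card (disagree u v)" arbitrary: u)
  case 0
  then have "u = v" using v by (simp add: disagree_empty_iff cube_def)
  then show ?case by simp
next
  case (Suc n)
  then obtain i where i: "i \<in> disagree u v" by fastforce
  have len: "length u = D" "length v = D" using Suc.prems v by (simp_all add: cube_def)
  with i have "i < D" by (simp add: disagree_def)
  with i len have "disagree (flip i u) v = disagree u v - {i}" by (simp add: toggle_def)
  with Suc.hyps(2) i have "card (disagree (flip i u) v) = n" by simp
  with Suc.hyps(1) Suc.prems have "f (flip i u) = f v" by simp
  with inv[OF Suc.prems \<open>i < D\<close>] show ?case by simp
qed

theorem lemma8p3:
  fixes D :: nat and x :: "bool list" and B :: "bool list \<Rightarrow> bool list \<Rightarrow> real"
  assumes "D \<ge> 1"
    and "x \<in> cube D"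
    and "\<forall>y\<in>cube D. \<forall>z\<in>cube D. B y z = B z y"
    and "A_like D B"
    and "\<forall>y\<in>cube D. B x y = 0"
  shows "\<forall>y\<in>cube D. \<forall>z\<in>cube D. B y z = 0"
proof (intro ballI)
  fix y z assume y: "y \<in> cube D" and z: "z \<in> cube D"
  have diag: "B v v = 0" if "v \<in> cube D" for v
    using flip_invariant_const[of D "\<lambda>v. B v v", OF A_like_diag_flip[OF assms(4)] that assms(2)]
      assms(2,5) by simp
  have edge: "B v (flip k v) = 0" if "v \<in> cube D" "k < D" for v k
    using flip_invariant_const[of D "\<lambda>v. B v (flip k v)", OF _ that(1) assms(2)]
      symmetric_A_like_edge_flip[OF assms(4,3) _ _ that(2)] assms(2,5) by simp
  consider "y = z" | "adj y z" | "y \<noteq> z" "\<not> adj y z" by blast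
  then show "B y z = 0"
  proof cases
    case 2
    then obtain k where "k < length y" "z = flip k y" by (rule adj_imp_flip)
    with y edge show ?thesis by (simp add: cube_def)
  qed (use diag y z assms(4) in \<open>auto simp: A_like_def\<close>)
qed

end
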